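(* Let $P$ be a continuous $L$-ordered set. Then $\Sigma_LP=(P,\sigma_L(P))$ is a locally super-compact $L$-topological space. Consequently, if $P$ is moreover an $L$-dcpo, then $\Sigma_LP$ is a locally super-compact $L$-sober space.
   Context: $L$ is a frame with implication $\to$. $L$-subsets of $X$: maps $X\to L$; nonempty: $\bigvee_xA(x)=1$; ${\rm sub}_X(A,B)=\bigwedge_xA(x)\to B(x)$. $L$-topology: $\mathcal O(X)\subseteq L^X$ closed under finite meets, arbitrary joins, containing constants; interior $A^\circ=\bigvee\{B\text{ open}:B\le A\}$. Super-compact: nonempty $A$ with ${\rm sub}_X(A,\bigvee_iV_i)=\bigvee_i{\rm sub}_X(A,V_i)$ for every family of open $V_i$; ${\rm SC}(X)$ is their set. Locally super-compact: every open $A$ equals $\bigvee_{B\in{\rm SC}(X)}{\rm sub}_X(B,A)\wedge B^\circ$. A point of $\mathcal O(X)$: $p:\mathcal O(X)\to L$ preserving binary meets and arbitrary joins with $p(\lambda_X)=\lambda$; $[x](A)=A(x)$; $L$-sober: $x\mapsto[x]$ bijective onto the points. $L$-order on $P$: $e$ with $e(x,x)=1$, $e(x,y)\wedge e(y,z)\le e(x,z)$, $e(x,y)\wedge e(y,x)=1\Rightarrow x=y$. ${\downarrow}y(x)=e(x,y)$. $\sqcup A=x$ iff $e(x,y)={\rm sub}_P(A,{\downarrow}y)$ for all $y$. Directed: nonempty and $D(x)\wedge D(y)\le\bigvee_zD(z)\wedge e(x,z)\wedge e(y,z)$; ideal: directed lower set. $L$-dcpo: all directed $L$-subsets have suprema.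 ${\Downarrow}x(y)=\bigwedge\{e(x,\sqcup I)\to I(y):I\text{ ideal with a supremum}\}$; $P$ continuous if each ${\Downarrow}x$ is directed with supremum $x$. $\sigma_L(P)$: upper sets $A$ with $A(\sqcup D)=\bigvee_xA(x)\wedge D(x)$ for all directed $D$ having a supremum. *)

theory Defs
  imports Main
begin

class frame = complete_lattice +
  assumes inf_Sup_distrib_frame: "inf a (Sup S) = (SUP s\<in>S. inf a s)"

definition himp :: "'l::frame \<Rightarrow> 'l \<Rightarrow> 'l" where
  "himp a b = Sup {c. inf c a \<le> b}"

definition Lnonempty :: "('a \<Rightarrow> 'l::frame) \<Rightarrow> bool" where
  "Lnonempty A \<longleftrightarrow> (SUP x. A x) = top"

definition Lsub :: "('a \<Rightarrow> 'l::frame) \<Rightarrow> ('a \<Rightarrow> 'l) \<Rightarrow> 'l" where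
  "Lsub A B = (INF x. himp (A x) (B x))"

definition is_Ltopology :: "('a \<Rightarrow> 'l::frame) set \<Rightarrow> bool" where
  "is_Ltopology T \<longleftrightarrow>
     (\<forall>A\<in>T. \<forall>B\<in>T. inf A B \<in> T) \<and>
     (\<forall>S. S \<subseteq> T \<longrightarrow> Sup S \<in> T) \<and>
     (\<forall>c. (\<lambda>_. c) \<in> T)"

definition Linterior :: "('a \<Rightarrow> 'l::frame) set \<Rightarrow> ('a \<Rightarrow> 'l) \<Rightarrow> ('a \<Rightarrow> 'l)" where
  "Linterior T A = Sup {B\<in>T. B \<le> A}"

definition super_compact :: "('a \<Rightarrow> 'l::frame) set \<Rightarrow> ('a \<Rightarrow> 'l) \<Rightarrow> bool" where
  "super_compact T A \<longleftrightarrow> Lnonempty A \<and>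
     (\<forall>\<V>. \<V> \<subseteq> T \<longrightarrow> Lsub A (Sup \<V>) = (SUP V\<in>\<V>. Lsub A V))"

definition SC :: "('a \<Rightarrow> 'l::frame) set \<Rightarrow> ('a \<Rightarrow> 'l) set" where
  "SC T = {A. super_compact T A}"

definition locally_super_compact :: "('a \<Rightarrow> 'l::frame) set \<Rightarrow> bool" where
  "locally_super_compact T \<longleftrightarrow>
     (\<forall>A\<in>T. A = (SUP B\<in>SC T. (\<lambda>x. inf (Lsub B A) (Linterior T B x))))"

text \<open>A point of the frame of open sets, given as a function that is only
  constrained on the open sets.\<close>
definition is_point :: "('a \<Rightarrow> 'l::frame) set \<Rightarrow> (('a \<Rightarrow> 'l) \<Rightarrow> 'l) \<Rightarrow> bool" where
  "is_point T p \<longleftrightarrow>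
     (\<forall>A\<in>T. \<forall>B\<in>T. p (inf A B) = inf (p A) (p B)) \<and>
     (\<forall>S. S \<subseteq> T \<longrightarrow> p (Sup S) = (SUP A\<in>S. p A)) \<and>
     (\<forall>c. p (\<lambda>_. c) = c)"

text \<open>L-sober: \<open>x \<mapsto> [x]\<close> is a bijection onto the points (points being
  identified when they agree on all open sets).\<close>
definition L_sober :: "('a \<Rightarrow> 'l::frame) set \<Rightarrow> bool" where
  "L_sober T \<longleftrightarrow>
     (\<forall>x. is_point T (\<lambda>A. A x)) \<and>
     (\<forall>x y. (\<forall>A\<in>T. A x = A y) \<longrightarrow> x = y) \<and>
     (\<forall>p. is_point T p \<longrightarrow> (\<exists>x. \<forall>A\<in>T. p A = A x))"

definition is_Lorder :: "('a \<Rightarrow> 'a \<Rightarrow> 'l::frame) \<Rightarrow> bool" where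
  "is_Lorder e \<longleftrightarrow>
     (\<forall>x. e x x = top) \<and>
     (\<forall>x y z. inf (e x y) (e y z) \<le> e x z) \<and>
     (\<forall>x y. inf (e x y) (e y x) = top \<longrightarrow> x = y)"

definition Ldown :: "('a \<Rightarrow> 'a \<Rightarrow> 'l::frame) \<Rightarrow> 'a \<Rightarrow> ('a \<Rightarrow> 'l)" where
  "Ldown e y = (\<lambda>x. e x y)"

definition is_Lsup :: "('a \<Rightarrow> 'a \<Rightarrow> 'l::frame) \<Rightarrow> ('a \<Rightarrow> 'l) \<Rightarrow> 'a \<Rightarrow> bool" where
  "is_Lsup e A x \<longleftrightarrow> (\<forall>y. e x y = Lsub A (Ldown e y))"

definition Ldirected :: "('a \<Rightarrow> 'a \<Rightarrow> 'l::frame) \<Rightarrow> ('a \<Rightarrow> 'l) \<Rightarrow> bool" where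
  "Ldirected e D \<longleftrightarrow> Lnonempty D \<and>
     (\<forall>x y. inf (D x) (D y) \<le> (SUP z. inf (D z) (inf (e x z) (e y z))))"

definition Llower :: "('a \<Rightarrow> 'a \<Rightarrow> 'l::frame) \<Rightarrow> ('a \<Rightarrow> 'l) \<Rightarrow> bool" where
  "Llower e A \<longleftrightarrow> (\<forall>x y. inf (A y) (e x y) \<le> A x)"

definition Lupper :: "('a \<Rightarrow> 'a \<Rightarrow> 'l::frame) \<Rightarrow> ('a \<Rightarrow> 'l) \<Rightarrow> bool" where
  "Lupper e A \<longleftrightarrow> (\<forall>x y. inf (A x) (e x y) \<le> A y)"

definition Lideal :: "('a \<Rightarrow> 'a \<Rightarrow> 'l::frame) \<Rightarrow> ('a \<Rightarrow> 'l) \<Rightarrow> bool" where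
  "Lideal e I \<longleftrightarrow> Ldirected e I \<and> Llower e I"

definition L_dcpo :: "('a \<Rightarrow> 'a \<Rightarrow> 'l::frame) \<Rightarrow> bool" where
  "L_dcpo e \<longleftrightarrow> (\<forall>D. Ldirected e D \<longrightarrow> (\<exists>x. is_Lsup e D x))"

text \<open>\<open>\<Down>x(y) = \<Sqinter>{e(x, \<squnion>I) \<rightarrow> I(y) : I ideal with a supremum}\<close>; the pair
  \<open>(I, s)\<close> ranges over ideals together with their (unique) supremum.\<close>
definition Lwaybelow :: "('a \<Rightarrow> 'a \<Rightarrow> 'l::frame) \<Rightarrow> 'a \<Rightarrow> ('a \<Rightarrow> 'l)" where
  "Lwaybelow e x = (\<lambda>y. INF Is\<in>{(I, s). Lideal e I \<and> is_Lsup e I s}.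
                          himp (e x (snd Is)) (fst Is y))"

definition L_continuous :: "('a \<Rightarrow> 'a \<Rightarrow> 'l::frame) \<Rightarrow> bool" where
  "L_continuous e \<longleftrightarrow> (\<forall>x. Ldirected e (Lwaybelow e x) \<and> is_Lsup e (Lwaybelow e x) x)"

definition sigmaL :: "('a \<Rightarrow> 'a \<Rightarrow> 'l::frame) \<Rightarrow> ('a \<Rightarrow> 'l) set" where
  "sigmaL e = {A. Lupper e A \<and>
     (\<forall>D s. Ldirected e D \<longrightarrow> is_Lsup e D s \<longrightarrow> A s = (SUP x. inf (A x) (D x)))}"

end

theory Submission
  imports Defs
begin

(* For z in P, the L-subset \<Up>z = (\<lambda>y. \<Down>y z) is Scott open: if D is directed with supremum s,
   then \<Or>\<^sub>x D(x) \<and> \<Down>x is an ideal with supremum s, so \<Down>s lies below it.  Continuity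
   writes every Scott open A as \<Or>\<^sub>x A(x) \<and> \<Up>x, and \<Up>x lies below the principal filter
   e(x,-), which is super-compact because sub(e(x,-), A) = A(x) for every upper set A; this is
   local super-compactness.  For sobriety, a point p gives the directed L-subset z \<mapsto> p(\<Up>z),
   whose supremum x satisfies p = [x]; x is unique since the open sets \<Up>z determine \<Down>x. *)

lemma inf_SUP_frame: "inf (a::'l::frame) (SUP i\<in>I. f i) = (SUP i\<in>I. inf a (f i))"
  using inf_Sup_distrib_frame[of a "f ` I"] by (simp add: image_comp)

lemma SUP_inf_frame: "inf (SUP i\<in>I. f i) (a::'l::frame) = (SUP i\<in>I. inf (f i) a)"
  using inf_SUP_frame[of a f I] by (simp add: inf_commute)

lemma inf_SUP_leI:
  "(\<And>i. i \<in> I \<Longrightarrow> inf a (f i) \<le> b) \<Longrightarrow> inf (a::'l::frame) (SUP i\<in>I. f i) \<le> b"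
  by (simp add: inf_SUP_frame SUP_least)

lemma SUP_inf_leI:
  "(\<And>i. i \<in> I \<Longrightarrow> inf (f i) a \<le> b) \<Longrightarrow> inf (SUP i\<in>I. f i) (a::'l::frame) \<le> b"
  by (simp add: SUP_inf_frame SUP_least)

lemma le_himp_iff: "(c::'l::frame) \<le> himp a b \<longleftrightarrow> inf c a \<le> b"
proof
  assume "c \<le> himp a b"
  then have "inf c a \<le> inf a (Sup {c. inf c a \<le> b})"
    by (simp add: himp_def inf_commute le_infI2)
  also have "\<dots> \<le> b"
    unfolding inf_Sup_distrib_frame by (auto intro!: SUP_least simp: inf_commute)
  finally show "inf c a \<le> b" .
next
  assume "inf c a \<le> b"
  then show "c \<le> himp a b" unfolding himp_def by (rule Sup_upper[OF CollectI])
qed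

lemma le_Lsub_iff: "c \<le> Lsub A B \<longleftrightarrow> (\<forall>x. inf c (A x) \<le> B x)"
  by (simp add: Lsub_def le_INF_iff le_himp_iff)

lemma Lsub_inf_le: "inf (Lsub A B) (A x) \<le> B x"
  using le_Lsub_iff[of "Lsub A B" A B] by simp

lemma LupperD: "Lupper e A \<Longrightarrow> inf (A x) (e x y) \<le> A y"
  unfolding Lupper_def by blast

lemma LlowerD: "Llower e A \<Longrightarrow> inf (A y) (e x y) \<le> A x"
  unfolding Llower_def by blast

lemma Lupper_inf:
  assumes A: "Lupper e A" and B: "Lupper e B"
  shows "Lupper e (inf A B)"
  unfolding Lupper_def
proof (intro allI)
  fix x y
  have "inf (inf A B x) (e x y) \<le> inf (inf (A x) (e x y)) (inf (B x) (e x y))"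
    by (simp, meson inf.cobounded1 inf.cobounded2 le_inf_iff)
  also have "\<dots> \<le> inf A B y"
    unfolding inf_apply by (rule inf_mono[OF LupperD[OF A] LupperD[OF B]])
  finally show "inf (inf A B x) (e x y) \<le> inf A B y" .
qed

lemma Lupper_Sup: "(\<And>A. A \<in> S \<Longrightarrow> Lupper e A) \<Longrightarrow> Lupper e (Sup S)"
  unfolding Lupper_def Sup_apply by (blast intro: SUP_inf_leI SUP_upper2)

lemma Ldirected_SUP_inf_le:
  assumes D: "Ldirected e D" and A: "Lupper e A" and B: "Lupper e B"
  shows "inf (SUP x. inf (A x) (D x)) (SUP y. inf (B y) (D y))
           \<le> (SUP z. inf (inf (A z) (B z)) (D z))"
proof (rule SUP_inf_leI, rule inf_SUP_leI)
  fix x y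
  let ?R = "SUP z. inf (inf (A z) (B z)) (D z)"
  have "inf (inf (A x) (D x)) (inf (B y) (D y)) \<le> inf (inf (A x) (B y)) (inf (D x) (D y))"
    by (simp add: ac_simps)
  also have "\<dots> \<le> inf (inf (A x) (B y)) (SUP z. inf (D z) (inf (e x z) (e y z)))"
    using D unfolding Ldirected_def by (blast intro: inf_mono)
  also have "\<dots> \<le> ?R"
  proof (rule inf_SUP_leI)
    fix z
    have "inf (inf (A x) (B y)) (inf (D z) (inf (e x z) (e y z)))
            \<le> inf (inf (inf (A x) (e x z)) (inf (B y) (e y z))) (D z)"
      by (meson inf.cobounded1 inf.cobounded2 le_inf_iff)
    also have "\<dots> \<le> inf (inf (A z) (B z)) (D z)"
      by (rule inf_mono[OF inf_mono[OF LupperD[OF A] LupperD[OF B]] order_refl])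
    also have "\<dots> \<le> ?R" by (rule SUP_upper) simp
    finally show "inf (inf (A x) (B y)) (inf (D z) (inf (e x z) (e y z))) \<le> ?R" .
  qed
  finally show "inf (inf (A x) (D x)) (inf (B y) (D y)) \<le> ?R" .
qed

lemma Linterior_le: "Linterior T B \<le> B"
  unfolding Linterior_def by (rule Sup_least) blast

lemma le_Linterior: "C \<in> T \<Longrightarrow> C \<le> B \<Longrightarrow> C \<le> Linterior T B"
  unfolding Linterior_def by (rule Sup_upper) blast

lemma point_mono:
  assumes p: "is_point T p" and "A \<in> T" "B \<in> T" "A \<le> B"
  shows "p A \<le> p B"
proof -
  have "p A = p (inf A B)" using \<open>A \<le> B\<close> by (simp add: inf.absorb1)
  also have "\<dots> = inf (p A) (p B)" using p \<open>A \<in> T\<close> \<open>B \<in> T\<close> unfolding is_point_def by blast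
  finally show ?thesis by (simp add: inf.orderI)
qed

lemma point_SUP:
  assumes p: "is_point T p" and F: "\<And>i. F i \<in> T"
  shows "p (SUP i. F i) = (SUP i. p (F i))"
proof -
  have "range F \<subseteq> T" using F by blast
  then show ?thesis using p unfolding is_point_def by (simp add: image_comp)
qed

lemma point_inf_const:
  "is_point T p \<Longrightarrow> A \<in> T \<Longrightarrow> (\<lambda>_. c) \<in> T \<Longrightarrow> p (inf A (\<lambda>_. c)) = inf (p A) c"
  unfolding is_point_def by simp

locale Lordered =
  fixes e :: "'a \<Rightarrow> 'a \<Rightarrow> 'l::frame"
  assumes Lorder: "is_Lorder e"
begin

abbreviation waybelow :: "'a \<Rightarrow> 'a \<Rightarrow> 'l" (\<open>\<Down>\<close>)
  where "\<Down> \<equiv> Lwaybelow e"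

abbreviation (input) wayabove :: "'a \<Rightarrow> 'a \<Rightarrow> 'l" (\<open>\<Up>\<close>)
  where "\<Up> z \<equiv> \<lambda>y. \<Down> y z"

lemma Lorder_refl: "e x x = top"
  using Lorder by (simp add: is_Lorder_def)

lemma Lorder_trans: "inf (e x y) (e y z) \<le> e x z"
  using Lorder by (simp add: is_Lorder_def)

lemma Lorder_antisym: "inf (e x y) (e y x) = top \<Longrightarrow> x = y"
  using Lorder by (simp add: is_Lorder_def)

lemma le_is_Lsup_iff: "is_Lsup e A s \<Longrightarrow> c \<le> e s y \<longleftrightarrow> (\<forall>x. inf c (A x) \<le> e x y)"
  by (simp add: is_Lsup_def le_Lsub_iff Ldown_def)

lemma is_Lsup_upper: "is_Lsup e A s \<Longrightarrow> A x \<le> e x s"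
  using le_is_Lsup_iff[of A s top s] by (simp add: Lorder_refl)

lemma is_Lsup_unique:
  assumes "is_Lsup e A s" "is_Lsup e A t"
  shows "s = t"
proof (rule Lorder_antisym)
  have "e s t = e t t" "e t s = e s s"
    using assms unfolding is_Lsup_def by simp_all
  then show "inf (e s t) (e t s) = top" by (simp add: Lorder_refl)
qed

lemma Lideal_Ldown: "Lideal e (Ldown e y)"
  unfolding Lideal_def Ldirected_def Llower_def Lnonempty_def Ldown_def
proof (intro conjI allI)
  show "(SUP x. e x y) = top" by (metis Lorder_refl UNIV_I SUP_upper top_le)
  fix a b show "inf (e a y) (e b y) \<le> (SUP z. inf (e z y) (inf (e a z) (e b z)))"
    by (rule SUP_upper2[of y]) (simp_all add: Lorder_refl)
next
  fix a b show "inf (e b y) (e a b) \<le> e a y" using Lorder_trans by (simp add: inf_commute)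
qed

lemma is_Lsup_Ldown: "is_Lsup e (Ldown e y) y"
  unfolding is_Lsup_def
proof
  fix w
  show "e y w = Lsub (Ldown e y) (Ldown e w)"
  proof (rule order.antisym)
    show "e y w \<le> Lsub (Ldown e y) (Ldown e w)"
      unfolding le_Lsub_iff Ldown_def using Lorder_trans by (simp add: inf_commute)
    show "Lsub (Ldown e y) (Ldown e w) \<le> e y w"
      using Lsub_inf_le[of "Ldown e y" "Ldown e w" y] by (simp add: Ldown_def Lorder_refl)
  qed
qed

lemma Lupper_SUP_inf_le:
  assumes A: "Lupper e A" and s: "is_Lsup e D s"
  shows "(SUP x. inf (A x) (D x)) \<le> A s"
proof (rule SUP_least)
  fix x
  have "inf (A x) (D x) \<le> inf (A x) (e x s)" by (rule inf_mono[OF order_refl is_Lsup_upper[OF s]])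
  also have "\<dots> \<le> A s" by (rule LupperD[OF A])
  finally show "inf (A x) (D x) \<le> A s" .
qed

lemma sigmaLI:
  assumes "Lupper e A"
    and "\<And>D s. Ldirected e D \<Longrightarrow> is_Lsup e D s \<Longrightarrow> A s \<le> (SUP x. inf (A x) (D x))"
  shows "A \<in> sigmaL e"
  unfolding sigmaL_def using assms Lupper_SUP_inf_le by (blast intro: order.antisym)

lemma sigmaL_Lupper: "A \<in> sigmaL e \<Longrightarrow> Lupper e A"
  unfolding sigmaL_def by blast

lemma sigmaL_Scott:
  "A \<in> sigmaL e \<Longrightarrow> Ldirected e D \<Longrightarrow> is_Lsup e D s \<Longrightarrow> A s = (SUP x. inf (A x) (D x))"
  unfolding sigmaL_def by blast

lemma sigmaL_inf:
  assumes A: "A \<in> sigmaL e" and B: "B \<in> sigmaL e"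
  shows "inf A B \<in> sigmaL e"
proof (rule sigmaLI)
  show "Lupper e (inf A B)" using A B by (simp add: Lupper_inf sigmaL_Lupper)
  fix D s assume D: "Ldirected e D" and s: "is_Lsup e D s"
  have "inf (A s) (B s) = inf (SUP x. inf (A x) (D x)) (SUP y. inf (B y) (D y))"
    using sigmaL_Scott[OF A D s] sigmaL_Scott[OF B D s] by simp
  also have "\<dots> \<le> (SUP z. inf (inf (A z) (B z)) (D z))"
    using D A B by (simp add: Ldirected_SUP_inf_le sigmaL_Lupper)
  finally show "inf A B s \<le> (SUP x. inf (inf A B x) (D x))" by simp
qed

lemma sigmaL_Sup:
  assumes S: "S \<subseteq> sigmaL e"
  shows "Sup S \<in> sigmaL e"
proof (rule sigmaLI)
  show "Lupper e (Sup S)" using S by (blast intro: Lupper_Sup sigmaL_Lupper)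
  fix D s assume D: "Ldirected e D" and s: "is_Lsup e D s"
  show "Sup S s \<le> (SUP x. inf (Sup S x) (D x))"
    unfolding Sup_apply
  proof (rule SUP_least)
    fix A assume "A \<in> S"
    then have "A s = (SUP x. inf (A x) (D x))" using S sigmaL_Scott D s by blast
    also have "\<dots> \<le> (SUP x. inf (SUP A\<in>S. A x) (D x))"
      by (rule SUP_mono') (rule inf_mono[OF SUP_upper[OF \<open>A \<in> S\<close>] order_refl])
    finally show "A s \<le> \<dots>" .
  qed
qed

lemma sigmaL_const: "(\<lambda>_. c) \<in> sigmaL e"
proof (rule sigmaLI)
  show "Lupper e (\<lambda>_. c)" unfolding Lupper_def by simp
  fix D s assume "Ldirected e D"
  then have "(SUP x. D x) = top" unfolding Ldirected_def Lnonempty_def by simp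
  then show "c \<le> (SUP x. inf c (D x))" by (simp add: inf_SUP_frame[symmetric])
qed

lemma is_Ltopology_sigmaL: "is_Ltopology (sigmaL e)"
  unfolding is_Ltopology_def using sigmaL_inf sigmaL_Sup sigmaL_const by blast

lemma Lsub_principal: "Lupper e A \<Longrightarrow> Lsub (e x) A = A x"
  using Lsub_inf_le[of "e x" A x] LupperD[of e A x]
  by (simp add: order.antisym le_Lsub_iff Lorder_refl)

lemma super_compact_principal: "e x \<in> SC (sigmaL e)"
  unfolding SC_def super_compact_def
proof (intro CollectI conjI allI impI)
  show "Lnonempty (e x)" unfolding Lnonempty_def
    by (rule top_le, rule SUP_upper2[of x]) (simp_all add: Lorder_refl)
next
  fix V assume V: "V \<subseteq> sigmaL e"
  then have "Lsub (e x) (Sup V) = (SUP A\<in>V. A x)"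
    by (simp add: Lsub_principal sigmaL_Lupper sigmaL_Sup)
  also have "\<dots> = (SUP A\<in>V. Lsub (e x) A)"
    by (rule SUP_cong[OF refl]) (use V in \<open>auto simp: Lsub_principal sigmaL_Lupper\<close>)
  finally show "Lsub (e x) (Sup V) = (SUP A\<in>V. Lsub (e x) A)" .
qed

lemma Lwaybelow_inf_le: "Lideal e I \<Longrightarrow> is_Lsup e I s \<Longrightarrow> inf (\<Down> x w) (e x s) \<le> I w"
  unfolding Lwaybelow_def le_himp_iff[symmetric] by (rule INF_lower2[of "(I, s)"]) simp_all

lemma le_LwaybelowI:
  "(\<And>I s. Lideal e I \<Longrightarrow> is_Lsup e I s \<Longrightarrow> inf c (e x s) \<le> I w) \<Longrightarrow> c \<le> \<Down> x w"
  unfolding Lwaybelow_def le_INF_iff le_himp_iff by clarsimp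

lemma Lwaybelow_le: "\<Down> y z \<le> e z y"
  using Lwaybelow_inf_le[OF Lideal_Ldown is_Lsup_Ldown, of y z y]
  by (simp add: Lorder_refl Ldown_def)

lemma Llower_Lwaybelow: "Llower e (\<Down> x)"
  unfolding Llower_def
proof (intro allI)
  fix v w
  show "inf (\<Down> x w) (e v w) \<le> \<Down> x v"
  proof (rule le_LwaybelowI)
    fix I s assume I: "Lideal e I" "is_Lsup e I s"
    have "inf (inf (\<Down> x w) (e v w)) (e x s) = inf (inf (\<Down> x w) (e x s)) (e v w)"
      by (simp add: ac_simps)
    also have "\<dots> \<le> inf (I w) (e v w)" by (rule inf_mono[OF Lwaybelow_inf_le[OF I] order_refl])
    also have "\<dots> \<le> I v" using I unfolding Lideal_def Llower_def by blast
    finally show "inf (inf (\<Down> x w) (e v w)) (e x s) \<le> I v" .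
  qed
qed

lemma Lupper_wayabove: "Lupper e (\<Up> z)"
  unfolding Lupper_def
proof (intro allI)
  fix a b
  show "inf (\<Down> a z) (e a b) \<le> \<Down> b z"
  proof (rule le_LwaybelowI)
    fix I s assume I: "Lideal e I" "is_Lsup e I s"
    have "inf (inf (\<Down> a z) (e a b)) (e b s) \<le> inf (\<Down> a z) (e a s)"
      unfolding inf_assoc by (rule inf_mono[OF order_refl Lorder_trans])
    also have "\<dots> \<le> I z" by (rule Lwaybelow_inf_le[OF I])
    finally show "inf (inf (\<Down> a z) (e a b)) (e b s) \<le> I z" .
  qed
qed

end

definition Lwaybelow_union :: "('a \<Rightarrow> 'a \<Rightarrow> 'l::frame) \<Rightarrow> ('a \<Rightarrow> 'l) \<Rightarrow> 'a \<Rightarrow> 'l" where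
  "Lwaybelow_union e D w = (SUP x. inf (D x) (Lwaybelow e x w))"

locale Lcontinuous = Lordered +
  assumes continuous: "L_continuous e"
begin

lemma Ldirected_Lwaybelow: "Ldirected e (\<Down> x)"
  using continuous unfolding L_continuous_def by simp

lemma is_Lsup_Lwaybelow: "is_Lsup e (\<Down> x) x"
  using continuous unfolding L_continuous_def by simp

lemma SUP_Lwaybelow: "(SUP w. \<Down> x w) = top"
  using Ldirected_Lwaybelow[of x] unfolding Ldirected_def Lnonempty_def by simp

lemma Lwaybelow_upper_bound:
  "inf (\<Down> u a) (\<Down> u b) \<le> (SUP v. inf (\<Down> u v) (inf (e a v) (e b v)))"
  using Ldirected_Lwaybelow[of u] unfolding Ldirected_def by simp

lemma Lnonempty_Lwaybelow_union:
  assumes "Lnonempty D"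
  shows "Lnonempty (Lwaybelow_union e D)"
proof -
  have "(SUP w. Lwaybelow_union e D w) = (SUP x. SUP w. inf (D x) (\<Down> x w))"
    unfolding Lwaybelow_union_def by (rule SUP_commute)
  also have "\<dots> = (SUP x. D x)" by (simp add: inf_SUP_frame[symmetric] SUP_Lwaybelow)
  finally show ?thesis using assms unfolding Lnonempty_def by simp
qed

lemma Llower_Lwaybelow_union: "Llower e (Lwaybelow_union e D)"
  unfolding Llower_def Lwaybelow_union_def
proof (intro allI SUP_inf_leI)
  fix x y u
  have "inf (inf (D u) (\<Down> u y)) (e x y) \<le> inf (D u) (\<Down> u x)"
    unfolding inf_assoc by (rule inf_mono[OF order_refl LlowerD[OF Llower_Lwaybelow]])
  also have "\<dots> \<le> (SUP u. inf (D u) (\<Down> u x))" by (rule SUP_upper) simp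
  finally show "inf (inf (D u) (\<Down> u y)) (e x y) \<le> (SUP u. inf (D u) (\<Down> u x))" .
qed

lemma Ldirected_Lwaybelow_union:
  assumes D: "Ldirected e D"
  shows "Ldirected e (Lwaybelow_union e D)"
  unfolding Ldirected_def
proof (intro conjI allI)
  show "Lnonempty (Lwaybelow_union e D)"
    using D unfolding Ldirected_def by (blast intro: Lnonempty_Lwaybelow_union)
  fix a b
  let ?R = "SUP v. inf (Lwaybelow_union e D v) (inf (e a v) (e b v))"
  have "inf (Lwaybelow_union e D a) (Lwaybelow_union e D b)
          \<le> (SUP u. inf (inf (\<Down> u a) (\<Down> u b)) (D u))"
    using Ldirected_SUP_inf_le[OF D Lupper_wayabove Lupper_wayabove]
    by (simp add: Lwaybelow_union_def inf_commute)
  also have "\<dots> \<le> ?R"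
  proof (rule SUP_least)
    fix u
    have "inf (inf (\<Down> u a) (\<Down> u b)) (D u)
            \<le> inf (D u) (SUP v. inf (\<Down> u v) (inf (e a v) (e b v)))"
      by (subst inf_commute) (rule inf_mono[OF order_refl Lwaybelow_upper_bound])
    also have "\<dots> \<le> ?R"
    proof (rule inf_SUP_leI)
      fix v
      have "inf (D u) (inf (\<Down> u v) (inf (e a v) (e b v)))
              \<le> inf (inf (D u) (\<Down> u v)) (inf (e a v) (e b v))"
        by (simp add: inf_assoc)
      also have "\<dots> \<le> inf (Lwaybelow_union e D v) (inf (e a v) (e b v))"
        unfolding Lwaybelow_union_def by (rule inf_mono[OF SUP_upper order_refl]) simp
      also have "\<dots> \<le> ?R" by (rule SUP_upper) simp
      finally show "inf (D u) (inf (\<Down> u v) (inf (e a v) (e b v))) \<le> ?R" .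
    qed
    finally show "inf (inf (\<Down> u a) (\<Down> u b)) (D u) \<le> ?R" .
  qed
  finally show "inf (Lwaybelow_union e D a) (Lwaybelow_union e D b) \<le> ?R" .
qed

lemma is_Lsup_Lwaybelow_union:
  assumes s: "is_Lsup e D s"
  shows "is_Lsup e (Lwaybelow_union e D) s"
  unfolding is_Lsup_def
proof
  fix y
  let ?I = "Lwaybelow_union e D"
  show "e s y = Lsub ?I (Ldown e y)"
  proof (rule order.antisym)
    show "e s y \<le> Lsub ?I (Ldown e y)"
      unfolding le_Lsub_iff Ldown_def Lwaybelow_union_def
    proof (intro allI inf_SUP_leI)
      fix w x
      have "inf (e s y) (inf (D x) (\<Down> x w)) \<le> inf (e s y) (inf (e x s) (e w x))"
        by (rule inf_mono[OF order_refl inf_mono[OF is_Lsup_upper[OF s] Lwaybelow_le]])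
      also have "\<dots> = inf (e w x) (inf (e x s) (e s y))"
        by (simp add: ac_simps)
      also have "\<dots> \<le> e w y"
        by (rule order_trans[OF inf_mono[OF order_refl Lorder_trans] Lorder_trans])
      finally show "inf (e s y) (inf (D x) (\<Down> x w)) \<le> e w y" .
    qed
    show "Lsub ?I (Ldown e y) \<le> e s y"
      unfolding le_is_Lsup_iff[OF s]
    proof
      fix x
      show "inf (Lsub ?I (Ldown e y)) (D x) \<le> e x y"
        unfolding le_is_Lsup_iff[OF is_Lsup_Lwaybelow[of x]]
      proof
        fix w
        have "inf (inf (Lsub ?I (Ldown e y)) (D x)) (\<Down> x w) \<le> inf (Lsub ?I (Ldown e y)) (?I w)"
          unfolding inf_assoc Lwaybelow_union_def by (rule inf_mono[OF order_refl SUP_upper]) simp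
        also have "\<dots> \<le> e w y" using Lsub_inf_le[of ?I "Ldown e y" w] by (simp add: Ldown_def)
        finally show "inf (inf (Lsub ?I (Ldown e y)) (D x)) (\<Down> x w) \<le> e w y" .
      qed
    qed
  qed
qed

lemma Lwaybelow_le_SUP:
  assumes D: "Ldirected e D" and s: "is_Lsup e D s"
  shows "\<Down> s z \<le> (SUP x. inf (D x) (\<Down> x z))"
proof -
  have "Lideal e (Lwaybelow_union e D)"
    unfolding Lideal_def using D by (simp add: Ldirected_Lwaybelow_union Llower_Lwaybelow_union)
  then have "inf (\<Down> s z) (e s s) \<le> Lwaybelow_union e D z"
    using Lwaybelow_inf_le is_Lsup_Lwaybelow_union[OF s] by blast
  then show ?thesis by (simp add: Lorder_refl Lwaybelow_union_def)
qed

lemma wayabove_sigmaL: "\<Up> z \<in> sigmaL e"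
proof (rule sigmaLI[OF Lupper_wayabove])
  fix D s assume "Ldirected e D" "is_Lsup e D s"
  then show "\<Down> s z \<le> (SUP x. inf (\<Down> x z) (D x))"
    using Lwaybelow_le_SUP by (simp add: inf_commute)
qed

lemma sigmaL_eq_SUP_Lwaybelow: "A \<in> sigmaL e \<Longrightarrow> A y = (SUP x. inf (A x) (\<Down> y x))"
  using sigmaL_Scott Ldirected_Lwaybelow is_Lsup_Lwaybelow by blast

lemma locally_super_compact_sigmaL: "locally_super_compact (sigmaL e)"
  unfolding locally_super_compact_def
proof (intro ballI ext order.antisym)
  fix A y assume A: "A \<in> sigmaL e"
  let ?R = "SUP B\<in>SC (sigmaL e). inf (Lsub B A) (Linterior (sigmaL e) B y)"
  show "A y \<le> (SUP B\<in>SC (sigmaL e). (\<lambda>x. inf (Lsub B A) (Linterior (sigmaL e) B x))) y"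
    unfolding SUP_apply sigmaL_eq_SUP_Lwaybelow[OF A, of y]
  proof (rule SUP_least)
    fix x
    have "\<Up> x \<le> Linterior (sigmaL e) (e x)"
      by (rule le_Linterior[OF wayabove_sigmaL]) (simp add: le_funI Lwaybelow_le)
    moreover have "Lsub (e x) A = A x" using A by (simp add: Lsub_principal sigmaL_Lupper)
    ultimately have "inf (A x) (\<Down> y x) \<le> inf (Lsub (e x) A) (Linterior (sigmaL e) (e x) y)"
      by (simp add: le_fun_def le_infI2)
    then show "inf (A x) (\<Down> y x) \<le> ?R"
      by (rule SUP_upper2[OF super_compact_principal])
  qed
  show "(SUP B\<in>SC (sigmaL e). (\<lambda>x. inf (Lsub B A) (Linterior (sigmaL e) B x))) y \<le> A y"
    unfolding SUP_apply
  proof (rule SUP_least)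
    fix B
    have "inf (Lsub B A) (Linterior (sigmaL e) B y) \<le> inf (Lsub B A) (B y)"
      by (rule inf_mono[OF order_refl le_funD[OF Linterior_le]])
    also have "\<dots> \<le> A y" by (rule Lsub_inf_le)
    finally show "inf (Lsub B A) (Linterior (sigmaL e) B y) \<le> A y" .
  qed
qed

lemma sigmaL_separates:
  assumes "\<forall>A\<in>sigmaL e. A x = A y"
  shows "x = y"
proof -
  have "\<Down> x z = \<Down> y z" for z
    using bspec[OF assms wayabove_sigmaL[of z]] by simp
  then have "\<Down> x = \<Down> y" by blast
  then have "is_Lsup e (\<Down> x) y" using is_Lsup_Lwaybelow[of y] by simp
  then show ?thesis using is_Lsup_Lwaybelow is_Lsup_unique by blast
qed

lemma sigmaL_eq_SUP_wayabove: "A \<in> sigmaL e \<Longrightarrow> A = (SUP z. inf (\<Up> z) (\<lambda>_. A z))"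
  by (rule ext) (simp add: sigmaL_eq_SUP_Lwaybelow[of A] image_comp inf_commute)

lemma Ldirected_point_wayabove:
  assumes p: "is_point (sigmaL e) p"
  shows "Ldirected e (\<lambda>z. p (\<Up> z))"
  unfolding Ldirected_def Lnonempty_def
proof (intro conjI allI)
  have "(SUP z. p (\<Up> z)) = p (SUP z. \<Up> z)" by (rule point_SUP[OF p wayabove_sigmaL, symmetric])
  also have "(SUP z. \<Up> z) = (\<lambda>_. top)" by (rule ext) (simp add: image_comp SUP_Lwaybelow)
  finally show "(SUP z. p (\<Up> z)) = top" using p unfolding is_point_def by simp
  fix a b
  have opens: "inf (\<Up> v) (\<lambda>_. inf (e a v) (e b v)) \<in> sigmaL e" for v
    by (rule sigmaL_inf[OF wayabove_sigmaL sigmaL_const])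
  have "inf (p (\<Up> a)) (p (\<Up> b)) = p (inf (\<Up> a) (\<Up> b))"
    using p wayabove_sigmaL unfolding is_point_def by simp
  also have "\<dots> \<le> p (SUP v. inf (\<Up> v) (\<lambda>_. inf (e a v) (e b v)))"
  proof (rule point_mono[OF p sigmaL_inf[OF wayabove_sigmaL wayabove_sigmaL] sigmaL_Sup])
    show "inf (\<Up> a) (\<Up> b) \<le> (SUP v. inf (\<Up> v) (\<lambda>_. inf (e a v) (e b v)))"
      by (rule le_funI) (simp add: image_comp Lwaybelow_upper_bound)
  qed (use opens in blast)
  also have "\<dots> = (SUP v. inf (p (\<Up> v)) (inf (e a v) (e b v)))"
    by (simp add: point_SUP[OF p opens] point_inf_const[OF p wayabove_sigmaL sigmaL_const])
  finally show "inf (p (\<Up> a)) (p (\<Up> b)) \<le> (SUP v. inf (p (\<Up> v)) (inf (e a v) (e b v)))" .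
qed

lemma point_sigmaL_eq_SUP:
  assumes p: "is_point (sigmaL e) p" and A: "A \<in> sigmaL e"
  shows "p A = (SUP z. inf (A z) (p (\<Up> z)))"
proof -
  have "p A = p (SUP z. inf (\<Up> z) (\<lambda>_. A z))" using sigmaL_eq_SUP_wayabove[OF A] by simp
  also have "\<dots> = (SUP z. inf (p (\<Up> z)) (A z))"
    by (simp add: point_SUP[OF p sigmaL_inf[OF wayabove_sigmaL sigmaL_const]]
        point_inf_const[OF p wayabove_sigmaL sigmaL_const])
  finally show ?thesis by (simp add: inf_commute)
qed

lemma L_sober_sigmaL:
  assumes "L_dcpo e"
  shows "L_sober (sigmaL e)"
  unfolding L_sober_def
proof (intro conjI allI impI)
  show "is_point (sigmaL e) (\<lambda>A. A x)" for x
    unfolding is_point_def by simp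
  show "(\<forall>A\<in>sigmaL e. A x = A y) \<Longrightarrow> x = y" for x y
    by (rule sigmaL_separates)
  fix p assume p: "is_point (sigmaL e) p"
  then obtain x where x: "is_Lsup e (\<lambda>z. p (\<Up> z)) x"
    using assms Ldirected_point_wayabove unfolding L_dcpo_def by blast
  have "p A = A x" if "A \<in> sigmaL e" for A
    using point_sigmaL_eq_SUP[OF p that] sigmaL_Scott[OF that Ldirected_point_wayabove[OF p] x]
    by simp
  then show "\<exists>x. \<forall>A\<in>sigmaL e. p A = A x" by blast
qed

end

theorem proposition4p2:
  fixes e :: "'a \<Rightarrow> 'a \<Rightarrow> 'l::frame"
  assumes "is_Lorder e" and "L_continuous e"
  shows "is_Ltopology (sigmaL e) \<and> locally_super_compact (sigmaL e) \<and>
         (L_dcpo e \<longrightarrow> L_sober (sigmaL e))"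
proof -
  interpret Lcontinuous e
    using assms by unfold_locales
  show ?thesis
    using is_Ltopology_sigmaL locally_super_compact_sigmaL L_sober_sigmaL by blast
qed

end
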